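(* Let $x,y\in\mathcal{Q}^\pi$. Then $(q_n^{(x+y)})$ converges in $(\mathcal D,d)$ if and only if $(q_n^{(x,y)})$ converges in $(\mathcal D,d)$. In this case $x+y\in\mathcal Q^\pi$ and $\lim_n q_n^{(x,y)}=\tfrac12\big([x+y]_\pi-[x]_\pi-[y]_\pi\big)$.
   Context: Let $\pi=(\pi_n)_{n\ge1}$ be a sequence of partitions $\pi_n=(t^n_0,\dots,t^n_{k_n})$ with $0=t^n_0<\dots<t^n_{k_n}<\infty$, $t^n_{k_n}\uparrow\infty$, and mesh tending to $0$ on compacts; sums over $i$ run over $0\le i<k_n$. $\mathcal D$ is the space of càdlàg functions $[0,\infty)\to\mathbb R$ with a metric $d$ inducing the Skorokhod $J_1$ topology. For $u,v,w\in\mathcal D$: $q_n^{(u,v)}(t)=\sum_{i:\,t^n_i\le t}(u(t^n_{i+1})-u(t^n_i))(v(t^n_{i+1})-v(t^n_i))$ and $q_n^{(w)}=q_n^{(w,w)}$. $\mathcal Q^\pi$ is the set of $w\in\mathcal D$ such that $(q_n^{(w)})$ converges in $(\mathcal D,d)$, and for such $w$, $[w]_\pi:=\lim_n q_n^{(w)}$ in $(\mathcal D,d)$. *)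

theory Defs
  imports "HOL-Analysis.Analysis"
begin

text \<open>Sequence of partitions pi_n = (t n 0, ..., t n (k n)) of [0,infinity).\<close>
definition partition_seq :: "(nat \<Rightarrow> nat \<Rightarrow> real) \<Rightarrow> (nat \<Rightarrow> nat) \<Rightarrow> bool" where
  "partition_seq t k \<longleftrightarrow>
     (\<forall>n. t n 0 = 0) \<and>
     (\<forall>n. \<forall>i<k n. t n i < t n (Suc i)) \<and>
     mono (\<lambda>n. t n (k n)) \<and> filterlim (\<lambda>n. t n (k n)) at_top sequentially \<and>
     (\<forall>T>0. \<forall>e>0. eventually (\<lambda>n. \<forall>i<k n. t n i \<le> T \<longrightarrow> t n (Suc i) - t n i < e) sequentially)"

text \<open>Cadlag functions on [0,infinity) (values at negative times are irrelevant).\<close>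
definition cadlag :: "(real \<Rightarrow> real) \<Rightarrow> bool" where
  "cadlag f \<longleftrightarrow> (\<forall>t\<ge>0. (f \<longlongrightarrow> f t) (at_right t)) \<and>
                 (\<forall>t>0. \<exists>l. (f \<longlongrightarrow> l) (at_left t))"

definition Dspace :: "(real \<Rightarrow> real) set" where
  "Dspace = {f. cadlag f}"

definition time_change :: "(real \<Rightarrow> real) \<Rightarrow> bool" where
  "time_change l \<longleftrightarrow> continuous_on {0..} l \<and> strict_mono_on {0..} l \<and> l ` {0..} = {0..}"

text \<open>Convergence in the Skorokhod J1 topology on D[0,infinity)
  (Jacod--Shiryaev VI.1.14): f_n -> g iff there are time changes l_n with
  sup_t |l_n t - t| -> 0 and sup_{t<=T} |f_n (l_n t) - g t| -> 0 for every T.\<close>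
definition J1_conv :: "(nat \<Rightarrow> real \<Rightarrow> real) \<Rightarrow> (real \<Rightarrow> real) \<Rightarrow> bool" where
  "J1_conv f g \<longleftrightarrow> g \<in> Dspace \<and> (\<forall>n. f n \<in> Dspace) \<and>
     (\<exists>l::nat \<Rightarrow> real \<Rightarrow> real. (\<forall>n. time_change (l n)) \<and>
        (\<forall>e>0. eventually (\<lambda>n. \<forall>s\<ge>0. \<bar>l n s - s\<bar> \<le> e) sequentially) \<and>
        (\<forall>T\<ge>0. \<forall>e>0. eventually (\<lambda>n. \<forall>s\<in>{0..T}. \<bar>f n (l n s) - g s\<bar> \<le> e) sequentially))"

definition D_convergent :: "(nat \<Rightarrow> real \<Rightarrow> real) \<Rightarrow> bool" where
  "D_convergent f \<longleftrightarrow> (\<exists>g. J1_conv f g)"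

definition D_lim :: "(nat \<Rightarrow> real \<Rightarrow> real) \<Rightarrow> (real \<Rightarrow> real)" where
  "D_lim f = (THE g. J1_conv f g \<and> (\<forall>s<0. g s = 0))"

definition qvar :: "(nat \<Rightarrow> nat \<Rightarrow> real) \<Rightarrow> (nat \<Rightarrow> nat) \<Rightarrow> (real \<Rightarrow> real) \<Rightarrow> (real \<Rightarrow> real)
    \<Rightarrow> nat \<Rightarrow> real \<Rightarrow> real" where
  "qvar t k u v n s = (\<Sum>i\<in>{i. i < k n \<and> t n i \<le> s}.
      (u (t n (Suc i)) - u (t n i)) * (v (t n (Suc i)) - v (t n i)))"

definition Qpi :: "(nat \<Rightarrow> nat \<Rightarrow> real) \<Rightarrow> (nat \<Rightarrow> nat) \<Rightarrow> (real \<Rightarrow> real) set" where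
  "Qpi t k = {w \<in> Dspace. D_convergent (qvar t k w w)}"

definition qv_bracket :: "(nat \<Rightarrow> nat \<Rightarrow> real) \<Rightarrow> (nat \<Rightarrow> nat) \<Rightarrow> (real \<Rightarrow> real) \<Rightarrow> (real \<Rightarrow> real)" where
  "qv_bracket t k w = D_lim (qvar t k w w)"

end

theory Submission
  imports Defs
begin

(* Since q_n^(x+y) = q_n^(x) + q_n^(y) + 2 q_n^(x,y), everything follows once one knows that the
   J1 limits of these sequences add. J1 convergence is not additive in general, but all sequences
   involved are partition sums: step functions that jump only at partition points t_i^n, by the
   increment of the cell [t_i^n, t_(i+1)^n]. On short cells such an increment can only be large if
   the cell contains one of finitely many big jump times of x and y. Hence one canonical time change
   serves all of them at once: it moves each of finitely many exceptional times p (big jumps of x,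
   y and of the limits) to the left endpoint of the partition cell containing p, and is close to
   the identity elsewhere. *)

section \<open>Partitions and partition sums\<close>

lemma partition_strict_mono:
  assumes "partition_seq t k" "i < j" "j \<le> k n"
  shows "t n i < t n j"
  using assms(2,3)
proof (induction j)
  case (Suc j)
  then have "t n j < t n (Suc j)" using assms(1) by (auto simp: partition_seq_def)
  with Suc show ?case by (cases "i = j") auto
qed simp

lemma partition_mono:
  assumes "partition_seq t k" "i \<le> j" "j \<le> k n"
  shows "t n i \<le> t n j"
  using partition_strict_mono[OF assms(1) _ assms(3), of i] assms(2) by (cases "i = j") auto

lemma partition_nonneg:
  assumes "partition_seq t k" "i \<le> k n"
  shows "0 \<le> t n i"
  using partition_mono[OF assms(1) _ assms(2), of 0] assms(1) by (simp add: partition_seq_def)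

lemma partition_inj:
  assumes "partition_seq t k" "i \<le> k n" "j \<le> k n" "t n i = t n j"
  shows "i = j"
  using partition_strict_mono[OF assms(1), of i j n] partition_strict_mono[OF assms(1), of j i n] assms
  by (metis less_irrefl nat_neq_iff)

lemma partition_cell_unique:
  assumes "partition_seq t k" "i < k n" "j < k n"
    and "p \<in> {t n i<..t n (Suc i)}" "p \<in> {t n j<..t n (Suc j)}"
  shows "i = j"
proof (rule ccontr)
  assume "i \<noteq> j"
  then consider "Suc i \<le> j" | "Suc j \<le> i" by linarith
  then show False
  proof cases
    case 1
    then have "t n (Suc i) \<le> t n j" using partition_mono[OF assms(1)] assms(3) by simp
    then show False using assms(4,5) by simp
  next
    case 2
    then have "t n (Suc j) \<le> t n i" using partition_mono[OF assms(1)] assms(2) by simp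
    then show False using assms(4,5) by simp
  qed
qed

lemma partition_cell_exists:
  assumes "partition_seq t k" "0 < p" "p \<le> t n (k n)"
  shows "\<exists>i<k n. p \<in> {t n i<..t n (Suc i)}"
proof -
  define I where "I = {i. i \<le> k n \<and> t n i < p}"
  have fin: "finite I" unfolding I_def by auto
  have "0 \<in> I" using assms unfolding I_def by (simp add: partition_seq_def)
  then have "Max I \<in> I" using fin by (intro Max_in) auto
  define i where "i = Max I"
  have i: "i \<le> k n" "t n i < p" using \<open>Max I \<in> I\<close> unfolding i_def I_def by auto
  have max: "j \<le> i" if "j \<le> k n" "t n j < p" for j
    using Max_ge[OF fin, of j] that unfolding i_def I_def by auto
  have "i < k n" using i assms(3) by (metis le_neq_implies_less not_less)
  moreover have "p \<le> t n (Suc i)" using max[of "Suc i"] \<open>i < k n\<close> by fastforce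
  ultimately show ?thesis using i by auto
qed

definition partition_sum :: "(nat \<Rightarrow> nat \<Rightarrow> real) \<Rightarrow> (nat \<Rightarrow> nat) \<Rightarrow> (nat \<Rightarrow> nat \<Rightarrow> real)
    \<Rightarrow> nat \<Rightarrow> real \<Rightarrow> real" where
  "partition_sum t k c n s = (\<Sum>i\<in>{i. i < k n \<and> t n i \<le> s}. c n i)"

definition partition_sum_left :: "(nat \<Rightarrow> nat \<Rightarrow> real) \<Rightarrow> (nat \<Rightarrow> nat) \<Rightarrow> (nat \<Rightarrow> nat \<Rightarrow> real)
    \<Rightarrow> nat \<Rightarrow> real \<Rightarrow> real" where
  "partition_sum_left t k c n s = (\<Sum>i\<in>{i. i < k n \<and> t n i < s}. c n i)"

definition qvar_increment :: "(nat \<Rightarrow> nat \<Rightarrow> real) \<Rightarrow> (real \<Rightarrow> real) \<Rightarrow> (real \<Rightarrow> real) \<Rightarrow> nat \<Rightarrow> nat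
    \<Rightarrow> real" where
  "qvar_increment t u v n i = (u (t n (Suc i)) - u (t n i)) * (v (t n (Suc i)) - v (t n i))"

lemma qvar_eq_partition_sum: "qvar t k u v = partition_sum t k (qvar_increment t u v)"
  by (intro ext) (simp add: qvar_def partition_sum_def qvar_increment_def)

lemma qvar_increment_polarization:
  "qvar_increment t (\<lambda>s. x s + y s) (\<lambda>s. x s + y s) n i
     = qvar_increment t x x n i + qvar_increment t y y n i + 2 * qvar_increment t x y n i"
  unfolding qvar_increment_def by algebra

lemma partition_sum_add:
  "partition_sum t k (\<lambda>n i. c n i + d n i) n s = partition_sum t k c n s + partition_sum t k d n s"
  by (simp add: partition_sum_def sum.distrib)

lemma partition_sum_cmult:
  "partition_sum t k (\<lambda>n i. a * c n i) = (\<lambda>n s. a * partition_sum t k c n s)"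
  by (intro ext) (simp add: partition_sum_def sum_distrib_left)

lemma eventually_at_right_finite_le:
  fixes X :: "real set"
  assumes "finite X"
  shows "eventually (\<lambda>w. \<forall>x\<in>X. x \<le> w \<longleftrightarrow> x \<le> s) (at_right s)"
proof (rule eventually_ball_finite[OF assms], intro ballI)
  fix x assume "x \<in> X"
  show "eventually (\<lambda>w. x \<le> w \<longleftrightarrow> x \<le> s) (at_right s)"
  proof (cases "x \<le> s")
    case True
    then show ?thesis using eventually_at_right_less[of s] by (auto elim: eventually_mono)
  next
    case False
    then show ?thesis using eventually_at_right_real[of s x] by (auto elim: eventually_mono)
  qed
qed

lemma eventually_at_left_finite_le:
  fixes X :: "real set"
  assumes "finite X"
  shows "eventually (\<lambda>w. \<forall>x\<in>X. x \<le> w \<longleftrightarrow> x < s) (at_left s)"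
proof (rule eventually_ball_finite[OF assms], intro ballI)
  fix x assume "x \<in> X"
  show "eventually (\<lambda>w. x \<le> w \<longleftrightarrow> x < s) (at_left s)"
  proof (cases "x < s")
    case True
    then show ?thesis using eventually_at_left_real[of x s] by (auto elim: eventually_mono)
  next
    case False
    then show ?thesis using eventually_at_left_real[of "s - 1" s] by (auto elim: eventually_mono)
  qed
qed

lemma partition_sum_eventually_right:
  "eventually (\<lambda>w. partition_sum t k c n w = partition_sum t k c n s) (at_right s)"
  by (rule eventually_mono[OF eventually_at_right_finite_le[of "t n ` {..<k n}" s]])
    (auto simp: partition_sum_def intro!: sum.cong)

lemma partition_sum_eventually_left:
  "eventually (\<lambda>w. partition_sum t k c n w = partition_sum_left t k c n s) (at_left s)"
  by (rule eventually_mono[OF eventually_at_left_finite_le[of "t n ` {..<k n}" s]])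
    (auto simp: partition_sum_def partition_sum_left_def intro!: sum.cong)

lemma partition_sum_Dspace: "partition_sum t k c n \<in> Dspace"
  unfolding Dspace_def cadlag_def
  using tendsto_eventually[OF partition_sum_eventually_right]
    tendsto_eventually[OF partition_sum_eventually_left] by blast

lemma partition_sum_jump:
  assumes "partition_seq t k" "partition_sum t k c n q \<noteq> partition_sum_left t k c n q"
  shows "\<exists>i<k n. t n i = q \<and> partition_sum t k c n q - partition_sum_left t k c n q = c n i"
proof -
  have split: "{i. i < k n \<and> t n i \<le> q} = {i. i < k n \<and> t n i < q} \<union> {i. i < k n \<and> t n i = q}"
    by auto
  have sum: "partition_sum t k c n q = partition_sum_left t k c n q + sum (c n) {i. i < k n \<and> t n i = q}"
    unfolding partition_sum_def partition_sum_left_def split by (rule sum.union_disjoint) auto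
  then obtain i where i: "i < k n" "t n i = q"
    using assms(2) by (metis (mono_tags, lifting) add.right_neutral empty_Collect_eq sum.empty)
  have "{i. i < k n \<and> t n i = q} = {i}"
    using i partition_inj[OF assms(1), of _ n i] by auto
  then show ?thesis using i sum by auto
qed

section \<open>Cadlag functions\<close>

lemma Dspace_add: "f \<in> Dspace \<Longrightarrow> g \<in> Dspace \<Longrightarrow> (\<lambda>s. f s + g s) \<in> Dspace"
  unfolding Dspace_def cadlag_def by (auto intro!: tendsto_add) (metis tendsto_add)

lemma Dspace_cmult: "f \<in> Dspace \<Longrightarrow> (\<lambda>s. a * f s) \<in> Dspace"
  unfolding Dspace_def cadlag_def by (auto intro!: tendsto_mult_left) (metis tendsto_mult_left)

definition left_jump :: "(real \<Rightarrow> real) \<Rightarrow> real \<Rightarrow> real" where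
  "left_jump f p = f p - Lim (at_left p) f"

lemma Dspace_tendsto_Lim_at_left:
  assumes "f \<in> Dspace" "0 < p"
  shows "(f \<longlongrightarrow> Lim (at_left p) f) (at_left p)"
proof -
  obtain L where "(f \<longlongrightarrow> L) (at_left p)" using assms unfolding Dspace_def cadlag_def by auto
  then show ?thesis by (simp add: tendsto_Lim trivial_limit_at_left_real)
qed

lemma Dspace_near_point:
  assumes "f \<in> Dspace" "\<theta> > 0" "0 \<le> p"
  shows "\<exists>d>0. (\<forall>w\<in>{p..<p+d}. \<bar>f w - f p\<bar> \<le> \<theta>) \<and>
           (0 < p \<longrightarrow> (\<forall>w\<in>{p-d<..<p}. \<bar>f w - Lim (at_left p) f\<bar> \<le> \<theta>))"
proof -
  have "(f \<longlongrightarrow> f p) (at_right p)" using assms unfolding Dspace_def cadlag_def by auto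
  then have "eventually (\<lambda>w. \<bar>f w - f p\<bar> < \<theta>) (at_right p)"
    using assms(2) by (simp add: tendsto_iff dist_real_def)
  then obtain b1 where b1: "b1 > p" "\<And>w. p < w \<Longrightarrow> w < b1 \<Longrightarrow> \<bar>f w - f p\<bar> < \<theta>"
    unfolding eventually_at_right_field by auto
  have "\<exists>b2<p. 0 < p \<longrightarrow> (\<forall>w. b2 < w \<longrightarrow> w < p \<longrightarrow> \<bar>f w - Lim (at_left p) f\<bar> < \<theta>)"
  proof (cases "0 < p")
    case True
    then have "eventually (\<lambda>w. \<bar>f w - Lim (at_left p) f\<bar> < \<theta>) (at_left p)"
      using Dspace_tendsto_Lim_at_left[OF assms(1)] assms(2) by (simp add: tendsto_iff dist_real_def)
    then show ?thesis unfolding eventually_at_left_field by auto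
  qed (auto intro: exI[of _ "p - 1"])
  then obtain b2 where b2: "b2 < p" "\<And>w. 0 < p \<Longrightarrow> b2 < w \<Longrightarrow> w < p \<Longrightarrow> \<bar>f w - Lim (at_left p) f\<bar> < \<theta>"
    by blast
  have right: "\<bar>f w - f p\<bar> \<le> \<theta>" if "w \<in> {p..<p + min (b1 - p) (p - b2)}" for w
  proof (cases "w = p")
    case False
    have "w < b1" using that by (simp add: min_def split: if_split_asm)
    then show ?thesis using b1(2)[of w] that False by auto
  qed (use assms(2) in simp)
  have left: "\<bar>f w - Lim (at_left p) f\<bar> \<le> \<theta>"
    if "0 < p" "w \<in> {p - min (b1 - p) (p - b2)<..<p}" for w
  proof -
    have "b2 < w" using that by (simp add: min_def split: if_split_asm)
    then show ?thesis using b2(2)[of w] that by auto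
  qed
  show ?thesis
    using b1(1) b2(1) right left by (intro exI[of _ "min (b1 - p) (p - b2)"]) auto
qed

lemma oscillation_near_point:
  assumes "\<forall>w\<in>{p..<p+d}. \<bar>f w - f p\<bar> \<le> \<theta>"
    and "0 < p \<longrightarrow> (\<forall>w\<in>{p-d<..<p}. \<bar>f w - Lim (at_left p) f\<bar> \<le> \<theta>)"
    and "0 \<le> r" "r \<le> s" "\<bar>r - p\<bar> < d" "\<bar>s - p\<bar> < d"
  shows "\<bar>f s - f r\<bar> \<le> 2 * \<theta> \<or> (0 < p \<and> p \<in> {r<..s} \<and> \<bar>f s - f r\<bar> \<le> 2 * \<theta> + \<bar>left_jump f p\<bar>)"
proof -
  consider "p \<le> r" | "r < p" "s < p" | "r < p" "p \<le> s" by linarith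
  then show ?thesis
  proof cases
    case 1
    then have "\<bar>f r - f p\<bar> \<le> \<theta>" "\<bar>f s - f p\<bar> \<le> \<theta>" using assms by auto
    then show ?thesis by linarith
  next
    case 2
    then have "\<bar>f r - Lim (at_left p) f\<bar> \<le> \<theta>" "\<bar>f s - Lim (at_left p) f\<bar> \<le> \<theta>" using assms by auto
    then show ?thesis by linarith
  next
    case 3
    then have "\<bar>f r - Lim (at_left p) f\<bar> \<le> \<theta>" "\<bar>f s - f p\<bar> \<le> \<theta>" using assms by auto
    then show ?thesis using 3 assms(3) unfolding left_jump_def by auto
  qed
qed

lemma Dspace_oscillation:
  assumes "f \<in> Dspace" "\<theta> > 0"
  obtains \<delta> P where "\<delta> > 0" "finite P" "P \<subseteq> {0<..T}"
    "\<And>r s. 0 \<le> r \<Longrightarrow> r \<le> s \<Longrightarrow> s \<le> T \<Longrightarrow> s - r < \<delta> \<Longrightarrow>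
       \<bar>f s - f r\<bar> \<le> \<theta> \<or> (\<exists>p\<in>P. p \<in> {r<..s} \<and> \<bar>f s - f r\<bar> \<le> \<theta> + \<bar>left_jump f p\<bar>)"
proof -
  have "\<forall>p\<in>{0..T}. \<exists>d>0. (\<forall>w\<in>{p..<p+d}. \<bar>f w - f p\<bar> \<le> \<theta>/2) \<and>
           (0 < p \<longrightarrow> (\<forall>w\<in>{p-d<..<p}. \<bar>f w - Lim (at_left p) f\<bar> \<le> \<theta>/2))"
    using Dspace_near_point[OF assms(1) half_gt_zero[OF assms(2)]] by (meson atLeastAtMost_iff)
  then obtain d where d: "\<And>p. p \<in> {0..T} \<Longrightarrow> d p > 0 \<and> (\<forall>w\<in>{p..<p + d p}. \<bar>f w - f p\<bar> \<le> \<theta>/2) \<and>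
           (0 < p \<longrightarrow> (\<forall>w\<in>{p - d p<..<p}. \<bar>f w - Lim (at_left p) f\<bar> \<le> \<theta>/2))"
    by metis
  have cover: "{0..T} \<subseteq> (\<Union>p\<in>{0..T}. ball p (d p))"
  proof
    fix r assume "r \<in> {0..T}"
    then show "r \<in> (\<Union>p\<in>{0..T}. ball p (d p))" using d[of r] by (intro UN_I[of r]) auto
  qed
  obtain K where K: "K \<subseteq> {0..T}" "finite K" "{0..T} \<subseteq> (\<Union>p\<in>K. ball p (d p))"
    using compactE_image[where S="{0..T}" and C="{0..T}" and f="\<lambda>p. ball p (d p)"] cover by auto
  obtain \<delta> where \<delta>: "\<delta> > 0" "\<And>r. r \<in> {0..T} \<Longrightarrow> \<exists>G\<in>(\<lambda>p. ball p (d p)) ` K. ball r \<delta> \<subseteq> G"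
    using Heine_Borel_lemma[OF compact_Icc[of 0 T], where \<G>="(\<lambda>p. ball p (d p)) ` K"] K(3) by auto
  have "\<bar>f s - f r\<bar> \<le> \<theta> \<or> (\<exists>p\<in>K \<inter> {0<..}. p \<in> {r<..s} \<and> \<bar>f s - f r\<bar> \<le> \<theta> + \<bar>left_jump f p\<bar>)"
    if rs: "0 \<le> r" "r \<le> s" "s \<le> T" "s - r < \<delta>" for r s
  proof -
    obtain p where p: "p \<in> K" "ball r \<delta> \<subseteq> ball p (d p)" using \<delta>(2)[of r] rs by auto
    have "r \<in> ball p (d p)" "s \<in> ball p (d p)"
      using p(2) rs \<delta>(1) by (auto simp: subset_iff dist_real_def)
    then have dist: "\<bar>r - p\<bar> < d p" "\<bar>s - p\<bar> < d p" by (auto simp: dist_real_def abs_minus_commute)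
    have "p \<in> {0..T}" using p(1) K(1) by auto
    note dp = d[OF this]
    have "\<bar>f s - f r\<bar> \<le> 2 * (\<theta>/2) \<or>
        (0 < p \<and> p \<in> {r<..s} \<and> \<bar>f s - f r\<bar> \<le> 2 * (\<theta>/2) + \<bar>left_jump f p\<bar>)"
      using dp by (intro oscillation_near_point[OF _ _ rs(1,2) dist]) auto
    then show ?thesis using p(1) by auto
  qed
  moreover have "K \<inter> {0<..} \<subseteq> {0<..T}" using K(1) by auto
  ultimately show ?thesis using that[of \<delta> "K \<inter> {0<..}"] \<delta>(1) K(2) by blast
qed

lemma oscillation_without_big_jumps:
  assumes osc: "\<And>r s. 0 \<le> r \<Longrightarrow> r \<le> s \<Longrightarrow> s \<le> T \<Longrightarrow> s - r < \<delta> \<Longrightarrow>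
       \<bar>A s - A r\<bar> \<le> \<theta> \<or> (\<exists>p\<in>E. p \<in> {r<..s} \<and> \<bar>A s - A r\<bar> \<le> \<theta> + \<bar>left_jump A p\<bar>)"
    and "0 \<le> r" "0 \<le> s" "r \<le> T" "s \<le> T" "\<bar>r - s\<bar> < \<delta>" "0 \<le> \<eta>"
    and no_jump: "\<And>p. p \<in> E \<Longrightarrow> p \<in> {min r s<..max r s} \<Longrightarrow> \<bar>left_jump A p\<bar> \<le> \<eta>"
  shows "\<bar>A r - A s\<bar> \<le> \<theta> + \<eta>"
proof -
  have "\<bar>A r - A s\<bar> = \<bar>A (max r s) - A (min r s)\<bar>" by (simp add: max_def min_def abs_minus_commute)
  moreover have "\<bar>A (max r s) - A (min r s)\<bar> \<le> \<theta> \<or>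
      (\<exists>p\<in>E. p \<in> {min r s<..max r s} \<and> \<bar>A (max r s) - A (min r s)\<bar> \<le> \<theta> + \<bar>left_jump A p\<bar>)"
    using assms(2-6) by (intro osc) (auto simp: min_def max_def abs_minus_commute)
  ultimately show ?thesis using no_jump \<open>0 \<le> \<eta>\<close> by force
qed

section \<open>Time changes\<close>

lemma time_change_id: "time_change (\<lambda>s. s)"
  unfolding time_change_def by (auto simp: strict_mono_on_def)

lemma time_change_nonneg: "time_change l \<Longrightarrow> 0 \<le> s \<Longrightarrow> 0 \<le> l s"
  unfolding time_change_def by auto

lemma time_change_less_iff:
  assumes "time_change l" "0 \<le> a" "0 \<le> b"
  shows "l a < l b \<longleftrightarrow> a < b"
  using assms unfolding time_change_def
  by (metis atLeast_iff linorder_neq_iff order_less_asym strict_mono_onD)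

lemma time_change_order_agree:
  assumes "time_change l" "time_change \<nu>" "0 \<le> p" "0 \<le> s" "0 \<le> \<rho>" "l p = \<nu> p" "l \<rho> = \<nu> s"
  shows "s < p \<longleftrightarrow> \<rho> < p"
  using time_change_less_iff[OF assms(2) assms(4,3)] time_change_less_iff[OF assms(1) assms(5,3)] assms(6,7)
  by simp

lemma time_change_surj:
  assumes "time_change l" "0 \<le> w"
  obtains s where "0 \<le> s" "l s = w"
  using assms unfolding time_change_def by (metis atLeast_iff imageE)

lemma time_change_comp:
  assumes "time_change f" "time_change g"
  shows "time_change (\<lambda>s. f (g s))"
proof -
  have g: "g ` {0..} = {0..}" "continuous_on {0..} g" and f: "continuous_on {0..} f"
    using assms unfolding time_change_def by auto
  have "continuous_on {0..} (\<lambda>s. f (g s))"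
    using continuous_on_compose[OF g(2), unfolded g(1)] f by (simp add: comp_def)
  moreover have "strict_mono_on {0..} (\<lambda>s. f (g s))"
    using time_change_less_iff[OF assms(1)] time_change_less_iff[OF assms(2)]
      time_change_nonneg[OF assms(2)] by (auto intro!: strict_mono_onI)
  moreover have "(\<lambda>s. f (g s)) ` {0..} = {0..}"
    using assms g(1) unfolding time_change_def by (metis image_image)
  ultimately show ?thesis unfolding time_change_def by blast
qed

lemma time_change_filterlim_at_left:
  assumes "time_change l" "0 < p"
  shows "filterlim l (at_left (l p)) (at_left p)"
proof (rule tendsto_imp_filterlim_at_left)
  have "isCont l p"
    using assms continuous_on_interior[of "{0..}" l p] unfolding time_change_def by auto
  then show "(l \<longlongrightarrow> l p) (at_left p)"
    by (simp add: isCont_def filterlim_at_split)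
  show "eventually (\<lambda>w. l w < l p) (at_left p)"
    using eventually_at_left_real[of 0 p] assms
    by (auto elim!: eventually_mono simp: time_change_less_iff)
qed

lemma time_changed_left_limit:
  assumes l: "time_change l" "0 < p" and A: "A \<in> Dspace"
    and close: "\<forall>s\<in>{0<..<p}. \<bar>F (l s) - A s\<bar> \<le> e"
    and const: "eventually (\<lambda>w. F w = c) (at_left (l p))"
  shows "\<bar>c - Lim (at_left p) A\<bar> \<le> e"
proof -
  have "eventually (\<lambda>s. F (l s) = c) (at_left p)"
    using filterlim_iff[THEN iffD1, OF time_change_filterlim_at_left[OF l]] const by blast
  moreover have "eventually (\<lambda>s. s \<in> {0<..<p}) (at_left p)" using eventually_at_left_real[OF l(2)] .
  ultimately have "eventually (\<lambda>s. \<bar>c - A s\<bar> \<le> e) (at_left p)"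
    by eventually_elim (use close in auto)
  moreover have "((\<lambda>s. \<bar>c - A s\<bar>) \<longlongrightarrow> \<bar>c - Lim (at_left p) A\<bar>) (at_left p)"
    using Dspace_tendsto_Lim_at_left[OF A l(2)] by (intro tendsto_intros)
  ultimately show ?thesis
    by (intro tendsto_upperbound[of "\<lambda>s. \<bar>c - A s\<bar>"]) (auto simp: trivial_limit_at_left_real)
qed

definition point_shift :: "real \<Rightarrow> real \<Rightarrow> real \<Rightarrow> real \<Rightarrow> real" where
  "point_shift a b g s = s + (b - a) * max 0 (1 - \<bar>s - a\<bar> / g)"

lemma point_shift_at: "g > 0 \<Longrightarrow> point_shift a b g a = b"
  unfolding point_shift_def by simp

lemma point_shift_outside: "g > 0 \<Longrightarrow> g \<le> \<bar>s - a\<bar> \<Longrightarrow> point_shift a b g s = s"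
  unfolding point_shift_def by (simp add: field_simps)

lemma point_shift_displacement: "g > 0 \<Longrightarrow> \<bar>point_shift a b g s - s\<bar> \<le> \<bar>b - a\<bar>"
  unfolding point_shift_def by (simp add: abs_mult mult_left_le)

lemma point_shift_strict_mono:
  assumes "g > 0" "\<bar>b - a\<bar> < g" "s < s'"
  shows "point_shift a b g s < point_shift a b g s'"
proof -
  define h where "h x = max 0 (1 - \<bar>x - a\<bar> / g)" for x
  have "\<bar>h s' - h s\<bar> \<le> \<bar>(1 - \<bar>s' - a\<bar> / g) - (1 - \<bar>s - a\<bar> / g)\<bar>"
    unfolding h_def by (auto simp: max_def)
  also have "\<dots> = \<bar>(\<bar>s - a\<bar> - \<bar>s' - a\<bar>) / g\<bar>"
    by (simp add: diff_divide_distrib)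
  also have "\<dots> = \<bar>\<bar>s - a\<bar> - \<bar>s' - a\<bar>\<bar> / g"
    using assms(1) by simp
  also have "\<dots> \<le> (s' - s) / g"
    using assms by (intro divide_right_mono) auto
  finally have "\<bar>(b - a) * (h s' - h s)\<bar> \<le> \<bar>b - a\<bar> * ((s' - s) / g)"
    unfolding abs_mult by (intro mult_left_mono) auto
  also have "\<dots> < g * ((s' - s) / g)"
    using assms by (intro mult_strict_right_mono) auto
  also have "\<dots> = s' - s" using assms(1) by simp
  finally show ?thesis unfolding point_shift_def h_def[symmetric] by (simp add: algebra_simps abs_less_iff)
qed

lemma point_shift_time_change:
  assumes "g > 0" "g \<le> a" "\<bar>b - a\<bar> < g"
  shows "time_change (point_shift a b g)"
proof -
  have cont: "continuous_on S (point_shift a b g)" for S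
    unfolding point_shift_def by (intro continuous_intros) (use assms(1) in auto)
  have mono: "strict_mono_on {0..} (point_shift a b g)"
    using point_shift_strict_mono[OF assms(1,3)] by (auto intro: strict_mono_onI)
  have zero: "point_shift a b g 0 = 0" using point_shift_outside assms by auto
  have "point_shift a b g ` {0..} \<subseteq> {0..}"
    using zero point_shift_strict_mono[OF assms(1,3), of 0] by (force simp: le_less)
  moreover have "w \<in> point_shift a b g ` {0..}" if w: "0 \<le> w" for w
  proof -
    have "point_shift a b g (w + a + g) = w + a + g" using point_shift_outside assms w by auto
    then have "\<exists>s. 0 \<le> s \<and> s \<le> w + a + g \<and> point_shift a b g s = w"
      using zero w assms(1,2) by (intro IVT' cont) auto
    then show ?thesis by auto
  qed
  ultimately show ?thesis unfolding time_change_def using cont mono by auto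
qed

(* The last conjunct is the induction invariant that keeps the point shifts from interfering. *)
lemma time_change_moving_points:
  fixes E :: "real set"
  assumes "finite E" "g > 0" "\<forall>p\<in>E. g \<le> p" "\<forall>p\<in>E. \<forall>q\<in>E. p \<noteq> q \<longrightarrow> 2 * g \<le> \<bar>p - q\<bar>"
    and "\<forall>p\<in>E. \<bar>b p - p\<bar> < g"
  shows "\<exists>\<nu>. time_change \<nu> \<and> (\<forall>s. \<bar>\<nu> s - s\<bar> \<le> (\<Sum>p\<in>E. \<bar>b p - p\<bar>)) \<and> (\<forall>p\<in>E. \<nu> p = b p)
     \<and> (\<forall>s. (\<forall>p\<in>E. g \<le> \<bar>s - p\<bar>) \<longrightarrow> \<nu> s = s)"
  using assms
proof (induction E rule: finite_induct)
  case empty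
  show ?case using time_change_id by (intro exI[of _ "\<lambda>s. s"]) auto
next
  case (insert p E)
  have "\<exists>\<nu>. time_change \<nu> \<and> (\<forall>s. \<bar>\<nu> s - s\<bar> \<le> (\<Sum>p\<in>E. \<bar>b p - p\<bar>)) \<and> (\<forall>q\<in>E. \<nu> q = b q)
     \<and> (\<forall>s. (\<forall>q\<in>E. g \<le> \<bar>s - q\<bar>) \<longrightarrow> \<nu> s = s)"
    using insert.prems by (intro insert.IH) auto
  then obtain \<nu> where \<nu>: "time_change \<nu>" "\<forall>s. \<bar>\<nu> s - s\<bar> \<le> (\<Sum>p\<in>E. \<bar>b p - p\<bar>)"
    "\<forall>q\<in>E. \<nu> q = b q" "\<forall>s. (\<forall>q\<in>E. g \<le> \<bar>s - q\<bar>) \<longrightarrow> \<nu> s = s"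
    by blast
  define \<mu> where "\<mu> s = point_shift p (b p) g (\<nu> s)" for s
  have "time_change \<mu>"
    unfolding \<mu>_def using insert.prems by (intro time_change_comp[OF point_shift_time_change \<nu>(1)]) auto
  moreover have "\<bar>\<mu> s - s\<bar> \<le> (\<Sum>q\<in>insert p E. \<bar>b q - q\<bar>)" for s
    using point_shift_displacement[OF insert.prems(1), of p "b p" "\<nu> s"] \<nu>(2)[rule_format, of s] insert.hyps
    unfolding \<mu>_def by simp
  moreover have "\<mu> q = b q" if "q \<in> insert p E" for q
  proof (cases "q = p")
    case True
    have "g \<le> \<bar>p - q\<bar>" if "q \<in> E" for q
      using insert.prems(1,3) insert.hyps(2) that by fastforce
    then have "\<nu> p = p" using \<nu>(4) by blast
    then show ?thesis using True point_shift_at insert.prems(1) unfolding \<mu>_def by simp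
  next
    case False
    then have "2 * g \<le> \<bar>q - p\<bar>" "\<bar>b q - q\<bar> < g" using insert.prems(3,4) that by auto
    then have "g \<le> \<bar>b q - p\<bar>" by linarith
    then show ?thesis using \<nu>(3) that False point_shift_outside insert.prems(1) unfolding \<mu>_def by auto
  qed
  moreover have "\<mu> s = s" if "\<forall>q\<in>insert p E. g \<le> \<bar>s - q\<bar>" for s
    using that \<nu>(4) point_shift_outside insert.prems(1) unfolding \<mu>_def by simp
  ultimately show ?case by blast
qed

section \<open>Time changes adapted to a partition\<close>

lemma finite_set_separated:
  fixes E :: "real set"
  assumes "finite E"
  obtains g where "g > 0" "\<And>p q. p \<in> E \<Longrightarrow> q \<in> E \<Longrightarrow> p \<noteq> q \<Longrightarrow> g \<le> \<bar>p - q\<bar>"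
proof
  define D where "D = (\<lambda>(p, q). \<bar>p - q\<bar>) ` {(p, q) \<in> E \<times> E. p \<noteq> q}"
  have fin: "finite D" unfolding D_def using assms by (intro finite_imageI) (auto intro: finite_subset[of _ "E \<times> E"])
  show "0 < Min (insert 1 D)"
    using fin by (subst Min_gr_iff) (auto simp: D_def)
  show "Min (insert 1 D) \<le> \<bar>p - q\<bar>" if "p \<in> E" "q \<in> E" "p \<noteq> q" for p q
  proof (rule Min_le)
    show "\<bar>p - q\<bar> \<in> insert 1 D" unfolding D_def using that by (intro insertI2 image_eqI[of _ _ "(p, q)"]) auto
  qed (use fin in simp)
qed

(* Partition sums jump only at left endpoints of cells, so an adapted time change aligns the jump
   times in E with the jumps of the n-th partition sum. *)
definition partition_adapted :: "(nat \<Rightarrow> nat \<Rightarrow> real) \<Rightarrow> (nat \<Rightarrow> nat) \<Rightarrow> nat \<Rightarrow> real set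
    \<Rightarrow> (real \<Rightarrow> real) \<Rightarrow> bool" where
  "partition_adapted t k n E \<nu> \<longleftrightarrow>
     time_change \<nu> \<and> (\<forall>p\<in>E. \<exists>i<k n. p \<in> {t n i<..t n (Suc i)} \<and> \<nu> p = t n i)"

lemma partition_adapted_exists:
  assumes pt: "partition_seq t k" and E: "finite E" "E \<subseteq> {0<..B}" and "B \<le> t n (k n)" "0 < m"
    and mesh: "\<forall>i<k n. t n i \<le> B \<longrightarrow> t n (Suc i) - t n i < m"
    and sep: "\<And>p q. p \<in> insert 0 E \<Longrightarrow> q \<in> insert 0 E \<Longrightarrow> p \<noteq> q \<Longrightarrow> 2 * m \<le> \<bar>p - q\<bar>"
  shows "\<exists>\<nu>. partition_adapted t k n E \<nu> \<and> (\<forall>s. \<bar>\<nu> s - s\<bar> \<le> real (card E) * m)"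
proof -
  have "\<forall>p\<in>E. \<exists>i<k n. p \<in> {t n i<..t n (Suc i)}"
    using partition_cell_exists[OF pt] E(2) \<open>B \<le> t n (k n)\<close> by force
  then obtain i where i: "\<And>p. p \<in> E \<Longrightarrow> i p < k n \<and> p \<in> {t n (i p)<..t n (Suc (i p))}"
    by metis
  have close: "\<bar>t n (i p) - p\<bar> < m" if "p \<in> E" for p
    using mesh i[OF that] E(2) that by fastforce
  have "\<forall>p\<in>E. m \<le> p" using sep[of _ 0] E(2) \<open>0 < m\<close> by fastforce
  moreover have "\<forall>p\<in>E. \<forall>q\<in>E. p \<noteq> q \<longrightarrow> 2 * m \<le> \<bar>p - q\<bar>" using sep by simp
  ultimately obtain \<nu> where \<nu>: "time_change \<nu>" "\<forall>s. \<bar>\<nu> s - s\<bar> \<le> (\<Sum>p\<in>E. \<bar>t n (i p) - p\<bar>)"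
      "\<forall>p\<in>E. \<nu> p = t n (i p)"
    using time_change_moving_points[of E m "\<lambda>p. t n (i p)"] E(1) \<open>0 < m\<close> close by auto
  have "(\<Sum>p\<in>E. \<bar>t n (i p) - p\<bar>) \<le> real (card E) * m"
    using sum_mono[of E "\<lambda>p. \<bar>t n (i p) - p\<bar>" "\<lambda>_. m"] close by fastforce
  then have "\<forall>s. \<bar>\<nu> s - s\<bar> \<le> real (card E) * m" using \<nu>(2) by (meson order_trans)
  moreover have "partition_adapted t k n E \<nu>"
    unfolding partition_adapted_def using \<nu>(1,3) i by blast
  ultimately show ?thesis by blast
qed

lemma eventually_partition_adapted:
  assumes pt: "partition_seq t k" and E: "finite E" "E \<subseteq> {0<..}" and "\<beta> > 0"
  shows "eventually (\<lambda>n. \<exists>\<nu>. partition_adapted t k n E \<nu> \<and> (\<forall>s. \<bar>\<nu> s - s\<bar> \<le> \<beta>)) sequentially"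
proof -
  obtain g where g: "g > 0" "\<And>p q. p \<in> insert 0 E \<Longrightarrow> q \<in> insert 0 E \<Longrightarrow> p \<noteq> q \<Longrightarrow> g \<le> \<bar>p - q\<bar>"
    using finite_set_separated[of "insert 0 E"] E(1) by blast
  define m where "m = min (g / 2) (\<beta> / (real (card E) + 1))"
  have m: "m > 0" "2 * m \<le> g" "real (card E) * m \<le> \<beta>"
    using g(1) \<open>\<beta> > 0\<close> by (auto simp: m_def min_def field_simps)
  have sep: "2 * m \<le> \<bar>p - q\<bar>" if "p \<in> insert 0 E" "q \<in> insert 0 E" "p \<noteq> q" for p q
    using g(2)[OF that] m(2) by linarith
  define B where "B = Max (insert 0 E)"
  have B: "0 \<le> B" "E \<subseteq> {0<..B}" using E unfolding B_def by auto
  have "eventually (\<lambda>n. B \<le> t n (k n)) sequentially"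
    using pt unfolding partition_seq_def filterlim_at_top by auto
  moreover have "eventually (\<lambda>n. \<forall>i<k n. t n i \<le> B + 1 \<longrightarrow> t n (Suc i) - t n i < m) sequentially"
    using pt m(1) B(1) unfolding partition_seq_def by simp
  ultimately show ?thesis
  proof eventually_elim
    case (elim n)
    have "\<forall>i<k n. t n i \<le> B \<longrightarrow> t n (Suc i) - t n i < m" using elim(2) by auto
    then obtain \<nu> where "partition_adapted t k n E \<nu>" "\<forall>s. \<bar>\<nu> s - s\<bar> \<le> real (card E) * m"
      using partition_adapted_exists[OF pt E(1) B(2) elim(1) m(1) _ sep] by blast
    then show ?case using m(3) by (meson order_trans)
  qed
qed

section \<open>Skorokhod convergence\<close>

lemma J1_conv_cmult:
  assumes "J1_conv f g"
  shows "J1_conv (\<lambda>n s. a * f n s) (\<lambda>s. a * g s)"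
proof -
  obtain l where l: "\<forall>n. time_change (l n)" "\<forall>e>0. eventually (\<lambda>n. \<forall>s\<ge>0. \<bar>l n s - s\<bar> \<le> e) sequentially"
    and close: "\<forall>T\<ge>0. \<forall>e>0. eventually (\<lambda>n. \<forall>s\<in>{0..T}. \<bar>f n (l n s) - g s\<bar> \<le> e) sequentially"
    using assms unfolding J1_conv_def by blast
  have "eventually (\<lambda>n. \<forall>s\<in>{0..T}. \<bar>a * f n (l n s) - a * g s\<bar> \<le> e) sequentially"
    if "T \<ge> 0" "e > 0" for T e
  proof -
    have "eventually (\<lambda>n. \<forall>s\<in>{0..T}. \<bar>f n (l n s) - g s\<bar> \<le> e / (\<bar>a\<bar> + 1)) sequentially"
      using close that by simp
    then show ?thesis
    proof (rule eventually_mono, intro ballI)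
      fix n s assume "\<forall>s\<in>{0..T}. \<bar>f n (l n s) - g s\<bar> \<le> e / (\<bar>a\<bar> + 1)" "s \<in> {0..T}"
      then have "\<bar>a\<bar> * \<bar>f n (l n s) - g s\<bar> \<le> \<bar>a\<bar> * (e / (\<bar>a\<bar> + 1))" by (intro mult_left_mono) auto
      also have "\<dots> \<le> e" using \<open>e > 0\<close> by (simp add: field_simps)
      finally show "\<bar>a * f n (l n s) - a * g s\<bar> \<le> e" by (simp add: abs_mult right_diff_distrib[symmetric])
    qed
  qed
  then show ?thesis
    using assms l Dspace_cmult unfolding J1_conv_def by blast
qed

lemma eventually_diagonal_choice:
  fixes P :: "nat \<Rightarrow> nat \<Rightarrow> 'a \<Rightarrow> bool"
  assumes ev: "\<And>m. eventually (\<lambda>n. \<exists>x. P m n x) sequentially"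
    and antimono: "\<And>m m' n x. m' \<le> m \<Longrightarrow> P m n x \<Longrightarrow> P m' n x"
    and default: "\<And>n. Q n (d n)" and PQ: "\<And>m n x. P m n x \<Longrightarrow> Q n x"
  obtains X where "\<And>n. Q n (X n)" "\<And>m. eventually (\<lambda>n. P m n (X n)) sequentially"
proof
  define S where "S n = {m. m \<le> n \<and> (\<exists>x. P m n x)}" for n
  define X where "X n = (if S n = {} then d n else SOME x. P (Max (S n)) n x)" for n
  have fin: "finite (S n)" for n unfolding S_def by simp
  have max: "P (Max (S n)) n (X n)" if "S n \<noteq> {}" for n
  proof -
    have "Max (S n) \<in> S n" using fin that by (rule Max_in)
    then show ?thesis using that someI_ex[of "P (Max (S n)) n"] unfolding X_def S_def by auto
  qed
  show "Q n (X n)" for n using max[of n] default[of n] PQ unfolding X_def by (cases "S n = {}") auto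
  show "eventually (\<lambda>n. P m n (X n)) sequentially" for m
    using ev[of m] eventually_ge_at_top[of m]
  proof eventually_elim
    case (elim n)
    then have "m \<in> S n" unfolding S_def by simp
    then show ?case using max[of n] antimono[of m "Max (S n)"] fin by auto
  qed
qed

lemma J1_convI_eventually:
  assumes "g \<in> Dspace" "\<And>n. f n \<in> Dspace"
    and close: "\<And>T e. T > 0 \<Longrightarrow> e > 0 \<Longrightarrow> eventually (\<lambda>n. \<exists>l. time_change l \<and>
        (\<forall>s\<ge>0. \<bar>l s - s\<bar> \<le> e) \<and> (\<forall>s\<in>{0..T}. \<bar>f n (l s) - g s\<bar> \<le> e)) sequentially"
  shows "J1_conv f g"
proof -
  define P where "P m n l \<longleftrightarrow> time_change l \<and> (\<forall>s\<ge>0. \<bar>l s - s\<bar> \<le> 1 / (real m + 1)) \<and>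
      (\<forall>s\<in>{0..real m + 1}. \<bar>f n (l s) - g s\<bar> \<le> 1 / (real m + 1))" for m n l
  have P_antimono: "P m' n l" if "m' \<le> m" "P m n l" for m m' n l
  proof -
    have "1 / (real m + 1) \<le> 1 / (real m' + 1)" using that(1) by (simp add: frac_le)
    moreover have "{0..real m' + 1} \<subseteq> {0..real m + 1}" using that(1) by auto
    ultimately show ?thesis using that(2) unfolding P_def by (meson order_trans subsetD)
  qed
  have ev: "eventually (\<lambda>n. \<exists>l. P m n l) sequentially" for m
    using close[of "real m + 1" "1 / (real m + 1)"] unfolding P_def by simp
  have PQ: "P m n l \<Longrightarrow> time_change l" for m n l unfolding P_def by simp
  obtain l where l: "\<And>n. time_change (l n)" "\<And>m. eventually (\<lambda>n. P m n (l n)) sequentially"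
    by (rule eventually_diagonal_choice[where P=P and Q="\<lambda>_. time_change" and d="\<lambda>_ s. s"])
      (rule ev, erule (1) P_antimono, rule time_change_id, erule PQ, blast)
  have "eventually (\<lambda>n. (\<forall>s\<ge>0. \<bar>l n s - s\<bar> \<le> e) \<and> (\<forall>s\<in>{0..T}. \<bar>f n (l n s) - g s\<bar> \<le> e)) sequentially"
    if "e > 0" for T e
  proof -
    obtain m :: nat where m: "T \<le> real m" "1 / e \<le> real m" using real_arch_simple[of "max T (1 / e)"] by auto
    have le: "1 / (real m + 1) \<le> e" using m(2) \<open>e > 0\<close> by (simp add: field_simps)
    show ?thesis using l(2)[of m]
    proof eventually_elim
      case (elim n)
      then have bounds: "\<forall>s\<ge>0. \<bar>l n s - s\<bar> \<le> 1 / (real m + 1)"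
        "\<forall>s\<in>{0..real m + 1}. \<bar>f n (l n s) - g s\<bar> \<le> 1 / (real m + 1)"
        unfolding P_def by auto
      have "\<bar>f n (l n s) - g s\<bar> \<le> e" if "s \<in> {0..T}" for s
      proof -
        have "s \<in> {0..real m + 1}" using that m(1) by auto
        then show ?thesis using bounds(2) le by (meson order_trans)
      qed
      then show ?case using bounds(1) le by (meson order_trans)
    qed
  qed
  note conv = this
  show ?thesis unfolding J1_conv_def
  proof (intro conjI allI impI exI[of _ l])
    show "\<forall>\<^sub>F n in sequentially. \<forall>s\<ge>0. \<bar>l n s - s\<bar> \<le> e" if "e > 0" for e
      using conv[OF that, of 0] by eventually_elim auto
    show "\<forall>\<^sub>F n in sequentially. \<forall>s\<in>{0..T}. \<bar>f n (l n s) - g s\<bar> \<le> e" if "e > 0" for T e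
      using conv[OF that, of T] by eventually_elim auto
  qed (use assms(1,2) l(1) in auto)
qed

lemma J1_limits_close:
  fixes F g1 g2 :: "real \<Rightarrow> real"
  assumes "time_change l1" "time_change l2" "0 \<le> s" "d > 0"
    and "\<forall>w\<ge>0. \<bar>l1 w - w\<bar> \<le> d / 8" "\<forall>w\<ge>0. \<bar>l2 w - w\<bar> \<le> d / 8"
    and "\<forall>w\<in>{0..s + d}. \<bar>F (l1 w) - g1 w\<bar> \<le> e" "\<forall>w\<in>{0..s + d}. \<bar>F (l2 w) - g2 w\<bar> \<le> e"
    and "\<forall>w\<in>{s<..<s + d}. \<bar>g1 w - g1 s\<bar> \<le> e" "\<forall>w\<in>{s<..<s + d}. \<bar>g2 w - g2 s\<bar> \<le> e"
  shows "\<bar>g1 s - g2 s\<bar> \<le> 4 * e"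
proof -
  define r where "r = s + d / 2"
  have r: "0 \<le> r" "r \<in> {s<..<s + d}" using assms(3,4) unfolding r_def by auto
  obtain w where w: "0 \<le> w" "l2 w = l1 r" using time_change_surj[OF assms(2) time_change_nonneg[OF assms(1) r(1)]] .
  have "\<bar>l1 r - r\<bar> \<le> d / 8" "\<bar>l2 w - w\<bar> \<le> d / 8" using assms(5,6) w(1) r(1) by auto
  then have "\<bar>w - r\<bar> \<le> d / 4" using w(2) by linarith
  then have "s < w" "w < s + d" using assms(4) unfolding r_def abs_le_iff by linarith+
  then have "w \<in> {s<..<s + d}" by simp
  then have "\<bar>F (l1 r) - g1 r\<bar> \<le> e" "\<bar>F (l2 w) - g2 w\<bar> \<le> e" "\<bar>g1 r - g1 s\<bar> \<le> e" "\<bar>g2 w - g2 s\<bar> \<le> e"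
    using assms(7-10) r w(1) by auto
  then show ?thesis unfolding w(2) by linarith
qed

lemma J1_conv_unique:
  assumes "J1_conv f g1" "J1_conv f g2" "0 \<le> s"
  shows "g1 s = g2 s"
proof -
  have bound: "\<bar>g1 s - g2 s\<bar> \<le> 4 * e" if "e > 0" for e
  proof -
    have "(g1 \<longlongrightarrow> g1 s) (at_right s)" "(g2 \<longlongrightarrow> g2 s) (at_right s)"
      using assms unfolding J1_conv_def Dspace_def cadlag_def by auto
    then have "eventually (\<lambda>w. \<bar>g1 w - g1 s\<bar> < e) (at_right s)" "eventually (\<lambda>w. \<bar>g2 w - g2 s\<bar> < e) (at_right s)"
      using \<open>e > 0\<close> unfolding tendsto_iff dist_real_def by auto
    then have "eventually (\<lambda>w. \<bar>g1 w - g1 s\<bar> \<le> e \<and> \<bar>g2 w - g2 s\<bar> \<le> e) (at_right s)"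
      by eventually_elim auto
    then obtain b where b: "b > s" "\<forall>w\<in>{s<..<b}. \<bar>g1 w - g1 s\<bar> \<le> e \<and> \<bar>g2 w - g2 s\<bar> \<le> e"
      unfolding eventually_at_right_field by auto
    obtain l1 where l1: "\<forall>n. time_change (l1 n)" "\<forall>e>0. eventually (\<lambda>n. \<forall>s\<ge>0. \<bar>l1 n s - s\<bar> \<le> e) sequentially"
      "\<forall>T\<ge>0. \<forall>e>0. eventually (\<lambda>n. \<forall>s\<in>{0..T}. \<bar>f n (l1 n s) - g1 s\<bar> \<le> e) sequentially"
      using assms(1) unfolding J1_conv_def by blast
    obtain l2 where l2: "\<forall>n. time_change (l2 n)" "\<forall>e>0. eventually (\<lambda>n. \<forall>s\<ge>0. \<bar>l2 n s - s\<bar> \<le> e) sequentially"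
      "\<forall>T\<ge>0. \<forall>e>0. eventually (\<lambda>n. \<forall>s\<in>{0..T}. \<bar>f n (l2 n s) - g2 s\<bar> \<le> e) sequentially"
      using assms(2) unfolding J1_conv_def by blast
    define d where "d = b - s"
    have d: "d > 0" "0 \<le> s + d" using b(1) assms(3) unfolding d_def by auto
    have "eventually (\<lambda>n. (\<forall>w\<ge>0. \<bar>l1 n w - w\<bar> \<le> d / 8) \<and> (\<forall>w\<ge>0. \<bar>l2 n w - w\<bar> \<le> d / 8) \<and>
       (\<forall>w\<in>{0..s + d}. \<bar>f n (l1 n w) - g1 w\<bar> \<le> e) \<and> (\<forall>w\<in>{0..s + d}. \<bar>f n (l2 n w) - g2 w\<bar> \<le> e)) sequentially"
      using l1(2)[rule_format, of "d / 8"] l2(2)[rule_format, of "d / 8"]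
        l1(3)[rule_format, of "s + d" e] l2(3)[rule_format, of "s + d" e] d \<open>e > 0\<close>
      by (intro eventually_conj) auto
    then obtain n where "(\<forall>w\<ge>0. \<bar>l1 n w - w\<bar> \<le> d / 8) \<and> (\<forall>w\<ge>0. \<bar>l2 n w - w\<bar> \<le> d / 8) \<and>
       (\<forall>w\<in>{0..s + d}. \<bar>f n (l1 n w) - g1 w\<bar> \<le> e) \<and> (\<forall>w\<in>{0..s + d}. \<bar>f n (l2 n w) - g2 w\<bar> \<le> e)"
      using eventually_happens'[OF sequentially_bot] by blast
    then show ?thesis
      using J1_limits_close[OF l1(1)[rule_format] l2(1)[rule_format] assms(3) d(1)] b(2) unfolding d_def by auto
  qed
  have "\<bar>g1 s - g2 s\<bar> \<le> 0"
  proof (rule field_le_epsilon)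
    fix e :: real assume "0 < e"
    then show "\<bar>g1 s - g2 s\<bar> \<le> 0 + e" using bound[of "e / 4"] by simp
  qed
  then show ?thesis by simp
qed

lemma Dspace_zero_neg:
  assumes "g \<in> Dspace"
  shows "(\<lambda>s. if s < 0 then 0 else g s) \<in> Dspace"
proof -
  have right: "eventually (\<lambda>w. (if w < 0 then 0 else g w) = g w) (at_right s)" if "0 \<le> s" for s
    by (rule eventually_mono[OF eventually_at_right_less[of s]]) (use that in auto)
  have left: "eventually (\<lambda>w. (if w < 0 then 0 else g w) = g w) (at_left s)" if "0 < s" for s
    by (rule eventually_mono[OF eventually_at_left_real[of 0 s]]) (use that in auto)
  show ?thesis
    using assms tendsto_cong[OF right] tendsto_cong[OF left] unfolding Dspace_def cadlag_def by auto
qed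

lemma J1_conv_zero_neg: "J1_conv f g \<Longrightarrow> J1_conv f (\<lambda>s. if s < 0 then 0 else g s)"
  using Dspace_zero_neg unfolding J1_conv_def by auto

lemma D_lim_eq:
  assumes "J1_conv f g"
  shows "D_lim f = (\<lambda>s. if s < 0 then 0 else g s)"
  unfolding D_lim_def
proof (rule the_equality)
  show "J1_conv f (\<lambda>s. if s < 0 then 0 else g s) \<and> (\<forall>s<0. (if s < 0 then 0 else g s) = 0)"
    using J1_conv_zero_neg[OF assms] by simp
next
  fix h assume "J1_conv f h \<and> (\<forall>s<0. h s = 0)"
  then show "h = (\<lambda>s. if s < 0 then 0 else g s)"
    using J1_conv_unique[OF _ assms, of h] by (auto simp: not_less)
qed

lemma D_lim_J1_conv: "D_convergent f \<Longrightarrow> J1_conv f (D_lim f)"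
  unfolding D_convergent_def using D_lim_eq J1_conv_zero_neg by metis

lemma D_lim_J1_conv_nonneg: "J1_conv f g \<Longrightarrow> 0 \<le> s \<Longrightarrow> D_lim f s = g s"
  by (simp add: D_lim_eq)

lemma D_lim_neg: "D_convergent f \<Longrightarrow> s < 0 \<Longrightarrow> D_lim f s = 0"
  unfolding D_convergent_def using D_lim_eq by fastforce

section \<open>Additivity of Skorokhod limits of partition sums\<close>

(* The property that lets a single time change serve several partition sums at once. *)
definition localized_increments :: "(nat \<Rightarrow> nat \<Rightarrow> real) \<Rightarrow> (nat \<Rightarrow> nat) \<Rightarrow> (nat \<Rightarrow> nat \<Rightarrow> real) \<Rightarrow> bool"
  where
  "localized_increments t k c \<longleftrightarrow> (\<forall>T \<theta>. \<theta> > 0 \<longrightarrow> (\<exists>E \<delta>. finite E \<and> E \<subseteq> {0<..T} \<and> \<delta> > 0 \<and>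
     (\<forall>n j. j < k n \<and> t n (Suc j) \<le> T \<and> t n (Suc j) - t n j < \<delta> \<and> E \<inter> {t n j<..t n (Suc j)} = {}
        \<longrightarrow> \<bar>c n j\<bar> \<le> \<theta>)))"

lemma localized_increments_lincomb:
  assumes "localized_increments t k c" "localized_increments t k d"
  shows "localized_increments t k (\<lambda>n i. a * c n i + b * d n i)"
  unfolding localized_increments_def
proof (intro allI impI)
  fix T \<theta> :: real assume "\<theta> > 0"
  define \<eta> where "\<eta> = \<theta> / (\<bar>a\<bar> + \<bar>b\<bar> + 1)"
  have "\<eta> > 0" unfolding \<eta>_def using \<open>\<theta> > 0\<close> by simp
  obtain E1 \<delta>1 where 1: "finite E1" "E1 \<subseteq> {0<..T}" "\<delta>1 > 0" "\<forall>n j. j < k n \<and> t n (Suc j) \<le> T \<and>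
      t n (Suc j) - t n j < \<delta>1 \<and> E1 \<inter> {t n j<..t n (Suc j)} = {} \<longrightarrow> \<bar>c n j\<bar> \<le> \<eta>"
    using assms(1)[unfolded localized_increments_def, rule_format, OF \<open>\<eta> > 0\<close>, of T] by meson
  obtain E2 \<delta>2 where 2: "finite E2" "E2 \<subseteq> {0<..T}" "\<delta>2 > 0" "\<forall>n j. j < k n \<and> t n (Suc j) \<le> T \<and>
      t n (Suc j) - t n j < \<delta>2 \<and> E2 \<inter> {t n j<..t n (Suc j)} = {} \<longrightarrow> \<bar>d n j\<bar> \<le> \<eta>"
    using assms(2)[unfolded localized_increments_def, rule_format, OF \<open>\<eta> > 0\<close>, of T] by meson
  have "\<bar>a * c n j + b * d n j\<bar> \<le> \<theta>"
    if "j < k n" "t n (Suc j) \<le> T" "t n (Suc j) - t n j < min \<delta>1 \<delta>2"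
      "(E1 \<union> E2) \<inter> {t n j<..t n (Suc j)} = {}" for n j
  proof -
    have "E1 \<inter> {t n j<..t n (Suc j)} = {}" "E2 \<inter> {t n j<..t n (Suc j)} = {}"
      using that(4) by blast+
    then have "\<bar>c n j\<bar> \<le> \<eta>" "\<bar>d n j\<bar> \<le> \<eta>" using 1(4) 2(4) that(1-3) by auto
    have "\<bar>a * c n j + b * d n j\<bar> \<le> \<bar>a\<bar> * \<bar>c n j\<bar> + \<bar>b\<bar> * \<bar>d n j\<bar>"
      by (simp add: abs_mult[symmetric] abs_triangle_ineq)
    also have "\<dots> \<le> \<bar>a\<bar> * \<eta> + \<bar>b\<bar> * \<eta>"
      using \<open>\<bar>c n j\<bar> \<le> \<eta>\<close> \<open>\<bar>d n j\<bar> \<le> \<eta>\<close> by (intro add_mono mult_left_mono) auto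
    also have "\<dots> \<le> (\<bar>a\<bar> + \<bar>b\<bar> + 1) * \<eta>"
      using \<open>\<eta> > 0\<close> by (simp add: algebra_simps)
    also have "\<dots> = \<theta>"
      using abs_ge_zero[of a] abs_ge_zero[of b] unfolding \<eta>_def by simp
    finally show ?thesis .
  qed
  then show "\<exists>E \<delta>. finite E \<and> E \<subseteq> {0<..T} \<and> \<delta> > 0 \<and>
     (\<forall>n j. j < k n \<and> t n (Suc j) \<le> T \<and> t n (Suc j) - t n j < \<delta> \<and> E \<inter> {t n j<..t n (Suc j)} = {}
        \<longrightarrow> \<bar>a * c n j + b * d n j\<bar> \<le> \<theta>)"
    using 1(1-3) 2(1-3) by (intro exI[of _ "E1 \<union> E2"] exI[of _ "min \<delta>1 \<delta>2"]) auto
qed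

lemma localized_increments_cmult:
  "localized_increments t k c \<Longrightarrow> localized_increments t k (\<lambda>n i. a * c n i)"
  using localized_increments_lincomb[of t k c c a 0] by simp

lemma localized_increments_qvar:
  assumes pt: "partition_seq t k" and "u \<in> Dspace" "v \<in> Dspace"
  shows "localized_increments t k (qvar_increment t u v)"
  unfolding localized_increments_def qvar_increment_def
proof (intro allI impI)
  fix T \<theta> :: real assume "\<theta> > 0"
  define \<eta> where "\<eta> = min 1 \<theta>"
  have "\<eta> > 0" "\<eta> \<le> 1" "\<eta> \<le> \<theta>" using \<open>\<theta> > 0\<close> unfolding \<eta>_def by auto
  moreover have "\<eta> * \<eta> \<le> 1 * \<eta>" using \<open>\<eta> > 0\<close> \<open>\<eta> \<le> 1\<close> by (intro mult_right_mono) auto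
  ultimately have \<eta>: "\<eta> > 0" "\<eta> * \<eta> \<le> \<theta>" by linarith+
  obtain \<delta>u Pu where u: "\<delta>u > 0" "finite Pu" "Pu \<subseteq> {0<..T}"
    "\<And>r s. 0 \<le> r \<Longrightarrow> r \<le> s \<Longrightarrow> s \<le> T \<Longrightarrow> s - r < \<delta>u \<Longrightarrow>
       \<bar>u s - u r\<bar> \<le> \<eta> \<or> (\<exists>p\<in>Pu. p \<in> {r<..s} \<and> \<bar>u s - u r\<bar> \<le> \<eta> + \<bar>left_jump u p\<bar>)"
    using Dspace_oscillation[OF assms(2) \<eta>(1), where T=T] by blast
  obtain \<delta>v Pv where v: "\<delta>v > 0" "finite Pv" "Pv \<subseteq> {0<..T}"
    "\<And>r s. 0 \<le> r \<Longrightarrow> r \<le> s \<Longrightarrow> s \<le> T \<Longrightarrow> s - r < \<delta>v \<Longrightarrow>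
       \<bar>v s - v r\<bar> \<le> \<eta> \<or> (\<exists>p\<in>Pv. p \<in> {r<..s} \<and> \<bar>v s - v r\<bar> \<le> \<eta> + \<bar>left_jump v p\<bar>)"
    using Dspace_oscillation[OF assms(3) \<eta>(1), where T=T] by blast
  have "\<bar>(u (t n (Suc j)) - u (t n j)) * (v (t n (Suc j)) - v (t n j))\<bar> \<le> \<theta>"
    if j: "j < k n" "t n (Suc j) \<le> T" "t n (Suc j) - t n j < min \<delta>u \<delta>v"
      "(Pu \<union> Pv) \<inter> {t n j<..t n (Suc j)} = {}" for n j
  proof -
    have "0 \<le> t n j" "t n j \<le> t n (Suc j)"
      using partition_nonneg[OF pt] partition_mono[OF pt] j(1) by auto
    moreover have "\<forall>p\<in>Pu. p \<notin> {t n j<..t n (Suc j)}" "\<forall>p\<in>Pv. p \<notin> {t n j<..t n (Suc j)}"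
      using j(4) by blast+
    ultimately have "\<bar>u (t n (Suc j)) - u (t n j)\<bar> \<le> \<eta>" "\<bar>v (t n (Suc j)) - v (t n j)\<bar> \<le> \<eta>"
      using u(4)[of "t n j" "t n (Suc j)"] v(4)[of "t n j" "t n (Suc j)"] j(2,3) by auto
    then have "\<bar>(u (t n (Suc j)) - u (t n j)) * (v (t n (Suc j)) - v (t n j))\<bar> \<le> \<eta> * \<eta>"
      unfolding abs_mult by (intro mult_mono) auto
    then show ?thesis using \<eta>(2) by linarith
  qed
  then show "\<exists>E \<delta>. finite E \<and> E \<subseteq> {0<..T} \<and> \<delta> > 0 \<and>
     (\<forall>n j. j < k n \<and> t n (Suc j) \<le> T \<and> t n (Suc j) - t n j < \<delta> \<and> E \<inter> {t n j<..t n (Suc j)} = {}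
        \<longrightarrow> \<bar>(u (t n (Suc j)) - u (t n j)) * (v (t n (Suc j)) - v (t n j))\<bar> \<le> \<theta>)"
    using u(1-3) v(1-3) by (intro exI[of _ "Pu \<union> Pv"] exI[of _ "min \<delta>u \<delta>v"]) auto
qed

context
  fixes t :: "nat \<Rightarrow> nat \<Rightarrow> real" and k :: "nat \<Rightarrow> nat" and c :: "nat \<Rightarrow> nat \<Rightarrow> real" and n :: nat
    and A l :: "real \<Rightarrow> real" and E :: "real set" and T \<epsilon> \<sigma> m \<delta> g :: real
  assumes pt: "partition_seq t k" and A: "A \<in> Dspace"
    and l: "time_change l" "\<forall>s\<ge>0. \<bar>l s - s\<bar> \<le> \<sigma>"
    and close: "\<forall>s\<in>{0..T + 2}. \<bar>partition_sum t k c n (l s) - A s\<bar> \<le> \<epsilon> / 8"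
    and mesh: "\<forall>i<k n. t n i \<le> T + 3 \<longrightarrow> t n (Suc i) - t n i < m"
    and small: "\<forall>j. j < k n \<and> t n (Suc j) \<le> T + 3 \<and> t n (Suc j) - t n j < \<delta> \<and>
      E \<inter> {t n j<..t n (Suc j)} = {} \<longrightarrow> \<bar>c n j\<bar> \<le> \<epsilon> / 4"
    and sep: "\<And>p q. p \<in> E \<Longrightarrow> q \<in> E \<Longrightarrow> p \<noteq> q \<Longrightarrow> g \<le> \<bar>p - q\<bar>"
    and par: "\<sigma> \<le> 1" "m \<le> 1" "m \<le> \<delta>" "\<sigma> + m < g" "0 < \<epsilon>"
begin

lemma big_limit_jump_matched:
  assumes \<nu>: "partition_adapted t k n E \<nu>"
    and p: "p \<in> E" "0 < p" "p \<le> T + 1" "\<epsilon> / 2 < \<bar>left_jump A p\<bar>"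
  shows "l p = \<nu> p"
proof -
  let ?F = "partition_sum t k c n" and ?G = "partition_sum_left t k c n"
  (* The big jump of A at p forces a jump of the partition sum at l p, i.e. a partition point
     t n j = l p with a large increment; its cell must then contain p. *)
  define q where "q = l p"
  have q: "0 \<le> q" "\<bar>q - p\<bar> \<le> \<sigma>" using l p(2) time_change_nonneg unfolding q_def by auto
  have "\<bar>?F q - A p\<bar> \<le> \<epsilon> / 8" using close p(2,3) unfolding q_def by auto
  moreover have "\<bar>?G q - Lim (at_left p) A\<bar> \<le> \<epsilon> / 8"
    unfolding q_def using close p(3)
    by (intro time_changed_left_limit[OF l(1) p(2) A _ partition_sum_eventually_left]) auto
  ultimately have jump: "\<epsilon> / 4 < \<bar>?F q - ?G q\<bar>" using p(4) unfolding left_jump_def by linarith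
  then obtain j where j: "j < k n" "t n j = q" "?F q - ?G q = c n j"
    using partition_sum_jump[OF pt, of c n q] par(5) by fastforce
  have "t n j \<le> T + 2" using j(2) q(2) p(3) par(1) by (simp add: abs_le_iff)
  then have len: "t n (Suc j) - t n j < m" using mesh j(1) by simp
  have cell: "p \<in> {t n j<..t n (Suc j)}"
  proof (rule ccontr)
    assume out: "p \<notin> {t n j<..t n (Suc j)}"
    have "p' \<notin> {t n j<..t n (Suc j)}" if "p' \<in> E" for p'
    proof
      assume p': "p' \<in> {t n j<..t n (Suc j)}"
      then have "\<bar>p' - p\<bar> < g" using len j(2) q(2) par(4) by (auto simp: abs_le_iff abs_less_iff)
      then show False using sep[OF that p(1)] out p' by (cases "p' = p") auto
    qed
    then have "E \<inter> {t n j<..t n (Suc j)} = {}" by blast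
    moreover have "t n (Suc j) \<le> T + 3" using len \<open>t n j \<le> T + 2\<close> par(2) by linarith
    ultimately have "\<bar>c n j\<bar> \<le> \<epsilon> / 4" using small j(1) len par(3) by auto
    then show False using jump j(3) by simp
  qed
  obtain i where i: "i < k n" "p \<in> {t n i<..t n (Suc i)}" "\<nu> p = t n i"
    using \<nu> p(1) unfolding partition_adapted_def by blast
  have "i = j" using partition_cell_unique[OF pt i(1) j(1) i(2) cell] .
  then show ?thesis using i(3) j(2) unfolding q_def by simp
qed

lemma adapted_partition_sum_close:
  assumes \<nu>: "partition_adapted t k n E \<nu>" "\<forall>s. \<bar>\<nu> s - s\<bar> \<le> \<beta>" and E: "E \<subseteq> {0<..}"
    and osc: "\<And>r s. 0 \<le> r \<Longrightarrow> r \<le> s \<Longrightarrow> s \<le> T + 1 \<Longrightarrow> s - r < \<delta>A \<Longrightarrow>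
       \<bar>A s - A r\<bar> \<le> \<epsilon> / 4 \<or> (\<exists>p\<in>E. p \<in> {r<..s} \<and> \<bar>A s - A r\<bar> \<le> \<epsilon> / 4 + \<bar>left_jump A p\<bar>)"
    and "\<sigma> + \<beta> < \<delta>A" "\<sigma> + \<beta> \<le> 1" and s: "s \<in> {0..T}"
  shows "\<bar>partition_sum t k c n (\<nu> s) - A s\<bar> \<le> \<epsilon>"
proof -
  have tc: "time_change \<nu>" using \<nu> unfolding partition_adapted_def by blast
  obtain \<rho> where \<rho>: "0 \<le> \<rho>" "l \<rho> = \<nu> s"
    using time_change_surj[OF l(1) time_change_nonneg[OF tc]] s by auto
  have "\<bar>l \<rho> - \<rho>\<bar> \<le> \<sigma>" "\<bar>\<nu> s - s\<bar> \<le> \<beta>" using l(2) \<rho>(1) \<nu>(2) by auto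
  then have \<rho>s: "\<bar>\<rho> - s\<bar> < \<delta>A" "\<rho> \<le> T + 1" using \<rho>(2) assms(5,6) s by (auto simp: abs_le_iff)
  have "\<rho> \<in> {0..T + 2}" using \<rho>(1) \<rho>s(2) by simp
  then have "\<bar>partition_sum t k c n (\<nu> s) - A \<rho>\<bar> \<le> \<epsilon> / 8" using close \<rho>(2) by metis
  moreover have "\<bar>A \<rho> - A s\<bar> \<le> \<epsilon> / 4 + \<epsilon> / 2"
  proof (rule oscillation_without_big_jumps[OF osc \<rho>(1) _ \<rho>s(2) _ \<rho>s(1)])
    fix p assume p: "p \<in> E" "p \<in> {min \<rho> s<..max \<rho> s}"
    show "\<bar>left_jump A p\<bar> \<le> \<epsilon> / 2"
    proof (rule ccontr)
      assume "\<not> ?thesis"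
      moreover have p0: "0 < p" "p \<le> T + 1" using p E \<rho>s(2) s by auto
      ultimately have "l p = \<nu> p" using big_limit_jump_matched[OF \<nu>(1) p(1)] by simp
      then have "s < p \<longleftrightarrow> \<rho> < p"
        using time_change_order_agree[OF l(1) tc] p0(1) s \<rho> by auto
      then show False using p(2) by auto
    qed
  qed (use s par(5) in auto)
  ultimately show ?thesis by linarith
qed

end

definition adapted_close :: "(nat \<Rightarrow> nat \<Rightarrow> real) \<Rightarrow> (nat \<Rightarrow> nat) \<Rightarrow> (nat \<Rightarrow> real \<Rightarrow> real) \<Rightarrow> (real \<Rightarrow> real)
    \<Rightarrow> real \<Rightarrow> real \<Rightarrow> real set \<Rightarrow> real \<Rightarrow> bool" where
  "adapted_close t k F A T \<epsilon> E \<beta> \<longleftrightarrow> eventually (\<lambda>n. \<forall>\<nu>. partition_adapted t k n E \<nu> \<and> (\<forall>s. \<bar>\<nu> s - s\<bar> \<le> \<beta>)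
     \<longrightarrow> (\<forall>s\<in>{0..T}. \<bar>F n (\<nu> s) - A s\<bar> \<le> \<epsilon>)) sequentially"

lemma partition_sum_adapted_close:
  assumes pt: "partition_seq t k" and J: "J1_conv (partition_sum t k c) A"
    and "0 \<le> T" "0 < \<epsilon>" and E: "finite E" "E \<subseteq> {0<..}"
    and small: "\<delta> > 0" "\<forall>n j. j < k n \<and> t n (Suc j) \<le> T + 3 \<and> t n (Suc j) - t n j < \<delta> \<and>
      E \<inter> {t n j<..t n (Suc j)} = {} \<longrightarrow> \<bar>c n j\<bar> \<le> \<epsilon> / 4"
    and osc: "\<delta>A > 0" "\<And>r s. 0 \<le> r \<Longrightarrow> r \<le> s \<Longrightarrow> s \<le> T + 1 \<Longrightarrow> s - r < \<delta>A \<Longrightarrow>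
       \<bar>A s - A r\<bar> \<le> \<epsilon> / 4 \<or> (\<exists>p\<in>E. p \<in> {r<..s} \<and> \<bar>A s - A r\<bar> \<le> \<epsilon> / 4 + \<bar>left_jump A p\<bar>)"
  shows "\<exists>\<beta>>0. adapted_close t k (partition_sum t k c) A T \<epsilon> E \<beta>"
proof -
  let ?F = "partition_sum t k c"
  obtain l where l: "\<forall>n. time_change (l n)" "\<forall>e>0. eventually (\<lambda>n. \<forall>s\<ge>0. \<bar>l n s - s\<bar> \<le> e) sequentially"
      "\<forall>T\<ge>0. \<forall>e>0. eventually (\<lambda>n. \<forall>s\<in>{0..T}. \<bar>?F n (l n s) - A s\<bar> \<le> e) sequentially"
    using J unfolding J1_conv_def by blast
  have A: "A \<in> Dspace" using J unfolding J1_conv_def by blast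
  obtain g where g: "g > 0" "\<And>p q. p \<in> E \<Longrightarrow> q \<in> E \<Longrightarrow> p \<noteq> q \<Longrightarrow> g \<le> \<bar>p - q\<bar>"
    using finite_set_separated[OF E(1)] by blast
  define \<sigma> where "\<sigma> = min (1/4) (min (\<delta>A/4) (g/4))"
  define \<beta> where "\<beta> = min (1/4) (\<delta>A/2)"
  define m where "m = min \<delta> (min (g/2) 1)"
  have par: "\<sigma> > 0" "\<beta> > 0" "m > 0" "\<sigma> \<le> 1" "m \<le> 1" "m \<le> \<delta>" "\<sigma> + m < g" "\<sigma> + \<beta> < \<delta>A" "\<sigma> + \<beta> \<le> 1"
    using g(1) small(1) osc(1) unfolding \<sigma>_def \<beta>_def m_def by auto
  have "eventually (\<lambda>n. (\<forall>s\<ge>0. \<bar>l n s - s\<bar> \<le> \<sigma>) \<and> (\<forall>s\<in>{0..T + 2}. \<bar>?F n (l n s) - A s\<bar> \<le> \<epsilon> / 8) \<and>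
      (\<forall>i<k n. t n i \<le> T + 3 \<longrightarrow> t n (Suc i) - t n i < m)) sequentially"
    using l(2) l(3)[rule_format, of "T + 2" "\<epsilon> / 8"] pt par(1,3) \<open>0 \<le> T\<close> \<open>0 < \<epsilon>\<close>
    unfolding partition_seq_def by (intro eventually_conj) auto
  then have "adapted_close t k ?F A T \<epsilon> E \<beta>"
    unfolding adapted_close_def
  proof eventually_elim
    case (elim n)
    have small_n: "\<forall>j. j < k n \<and> t n (Suc j) \<le> T + 3 \<and> t n (Suc j) - t n j < \<delta> \<and>
        E \<inter> {t n j<..t n (Suc j)} = {} \<longrightarrow> \<bar>c n j\<bar> \<le> \<epsilon> / 4"
      using small(2) by blast
    from elim have ln: "\<forall>s\<ge>0. \<bar>l n s - s\<bar> \<le> \<sigma>" "\<forall>s\<in>{0..T + 2}. \<bar>?F n (l n s) - A s\<bar> \<le> \<epsilon> / 8"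
        "\<forall>i<k n. t n i \<le> T + 3 \<longrightarrow> t n (Suc i) - t n i < m"
      by auto
    show ?case
      using adapted_partition_sum_close[OF pt A l(1)[rule_format, of n] ln small_n g(2) par(4-7) \<open>0 < \<epsilon>\<close>
          _ _ E(2) osc(2) par(8,9)] by blast
  qed
  then show ?thesis using par(2) by blast
qed

lemma partition_sum_adapted_close_superset:
  assumes pt: "partition_seq t k" and loc: "localized_increments t k c"
    and J: "J1_conv (partition_sum t k c) A" and "0 \<le> T" "0 < \<epsilon>"
  shows "\<exists>E. finite E \<and> E \<subseteq> {0<..} \<and> (\<forall>E'. finite E' \<and> E \<subseteq> E' \<and> E' \<subseteq> {0<..} \<longrightarrow>
     (\<exists>\<beta>>0. adapted_close t k (partition_sum t k c) A T \<epsilon> E' \<beta>))"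
proof -
  have "0 < \<epsilon> / 4" using \<open>0 < \<epsilon>\<close> by simp
  obtain E \<delta> where E: "finite E" "E \<subseteq> {0<..T + 3}" "\<delta> > 0" and small: "\<forall>n j. j < k n \<and> t n (Suc j) \<le> T + 3 \<and>
      t n (Suc j) - t n j < \<delta> \<and> E \<inter> {t n j<..t n (Suc j)} = {} \<longrightarrow> \<bar>c n j\<bar> \<le> \<epsilon> / 4"
    using loc[unfolded localized_increments_def, rule_format, OF \<open>0 < \<epsilon> / 4\<close>, of "T + 3"] by meson
  have "A \<in> Dspace" using J unfolding J1_conv_def by blast
  then obtain \<delta>A P where P: "\<delta>A > 0" "finite P" "P \<subseteq> {0<..T + 1}"
    and osc: "\<And>r s. 0 \<le> r \<Longrightarrow> r \<le> s \<Longrightarrow> s \<le> T + 1 \<Longrightarrow> s - r < \<delta>A \<Longrightarrow>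
       \<bar>A s - A r\<bar> \<le> \<epsilon> / 4 \<or> (\<exists>p\<in>P. p \<in> {r<..s} \<and> \<bar>A s - A r\<bar> \<le> \<epsilon> / 4 + \<bar>left_jump A p\<bar>)"
    using Dspace_oscillation[OF _ \<open>0 < \<epsilon> / 4\<close>, where T="T + 1"] by blast
  have "\<exists>\<beta>>0. adapted_close t k (partition_sum t k c) A T \<epsilon> E' \<beta>"
    if E': "finite E'" "E \<union> P \<subseteq> E'" "E' \<subseteq> {0<..}" for E'
  proof (rule partition_sum_adapted_close[OF pt J \<open>0 \<le> T\<close> \<open>0 < \<epsilon>\<close> E'(1,3) E(3) _ P(1)])
    have "E \<inter> {t n j<..t n (Suc j)} = {}" if "E' \<inter> {t n j<..t n (Suc j)} = {}" for n j
      using that E'(2) by blast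
    then show "\<forall>n j. j < k n \<and> t n (Suc j) \<le> T + 3 \<and> t n (Suc j) - t n j < \<delta> \<and>
        E' \<inter> {t n j<..t n (Suc j)} = {} \<longrightarrow> \<bar>c n j\<bar> \<le> \<epsilon> / 4"
      using small by blast
    show "\<bar>A s - A r\<bar> \<le> \<epsilon> / 4 \<or> (\<exists>p\<in>E'. p \<in> {r<..s} \<and> \<bar>A s - A r\<bar> \<le> \<epsilon> / 4 + \<bar>left_jump A p\<bar>)"
      if "0 \<le> r" "r \<le> s" "s \<le> T + 1" "s - r < \<delta>A" for r s
      using osc[OF that] E'(2) by blast
  qed
  then show ?thesis using E(1,2) P(2,3) by (intro exI[of _ "E \<union> P"]) auto
qed

lemma J1_conv_partition_sum_add:
  assumes pt: "partition_seq t k"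
    and "localized_increments t k c" "localized_increments t k d"
    and "J1_conv (partition_sum t k c) A" "J1_conv (partition_sum t k d) B"
  shows "J1_conv (partition_sum t k (\<lambda>n i. c n i + d n i)) (\<lambda>s. A s + B s)"
proof (rule J1_convI_eventually)
  show "(\<lambda>s. A s + B s) \<in> Dspace" using assms(4,5) Dspace_add unfolding J1_conv_def by blast
  show "partition_sum t k (\<lambda>n i. c n i + d n i) n \<in> Dspace" for n by (rule partition_sum_Dspace)
  fix T e :: real assume "T > 0" "e > 0"
  then have "0 \<le> T" "0 < e / 2" by simp_all
  obtain E1 where E1: "finite E1" "E1 \<subseteq> {0<..}" "\<forall>E'. finite E' \<and> E1 \<subseteq> E' \<and> E' \<subseteq> {0<..} \<longrightarrow>
     (\<exists>\<beta>>0. adapted_close t k (partition_sum t k c) A T (e / 2) E' \<beta>)"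
    using partition_sum_adapted_close_superset[OF pt assms(2,4) \<open>0 \<le> T\<close> \<open>0 < e / 2\<close>] by blast
  obtain E2 where E2: "finite E2" "E2 \<subseteq> {0<..}" "\<forall>E'. finite E' \<and> E2 \<subseteq> E' \<and> E' \<subseteq> {0<..} \<longrightarrow>
     (\<exists>\<beta>>0. adapted_close t k (partition_sum t k d) B T (e / 2) E' \<beta>)"
    using partition_sum_adapted_close_superset[OF pt assms(3,5) \<open>0 \<le> T\<close> \<open>0 < e / 2\<close>] by blast
  obtain \<beta>1 where \<beta>1: "\<beta>1 > 0" "adapted_close t k (partition_sum t k c) A T (e / 2) (E1 \<union> E2) \<beta>1"
    using E1(3) E1(1,2) E2(1,2) by blast
  obtain \<beta>2 where \<beta>2: "\<beta>2 > 0" "adapted_close t k (partition_sum t k d) B T (e / 2) (E1 \<union> E2) \<beta>2"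
    using E2(3) E1(1,2) E2(1,2) by blast
  have "eventually (\<lambda>n. \<exists>\<nu>. partition_adapted t k n (E1 \<union> E2) \<nu> \<and> (\<forall>s. \<bar>\<nu> s - s\<bar> \<le> min (min \<beta>1 \<beta>2) e))
      sequentially"
    by (rule eventually_partition_adapted[OF pt]) (use E1(1,2) E2(1,2) \<beta>1(1) \<beta>2(1) \<open>e > 0\<close> in auto)
  then show "eventually (\<lambda>n. \<exists>l. time_change l \<and> (\<forall>s\<ge>0. \<bar>l s - s\<bar> \<le> e) \<and>
      (\<forall>s\<in>{0..T}. \<bar>partition_sum t k (\<lambda>n i. c n i + d n i) n (l s) - (A s + B s)\<bar> \<le> e)) sequentially"
    using \<beta>1(2) \<beta>2(2) unfolding adapted_close_def
  proof eventually_elim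
    case (elim n)
    then obtain \<nu> where \<nu>: "partition_adapted t k n (E1 \<union> E2) \<nu>" "\<forall>s. \<bar>\<nu> s - s\<bar> \<le> min (min \<beta>1 \<beta>2) e"
      by blast
    then have bounds: "\<bar>partition_sum t k c n (\<nu> s) - A s\<bar> \<le> e / 2" "\<bar>partition_sum t k d n (\<nu> s) - B s\<bar> \<le> e / 2"
      if "s \<in> {0..T}" for s
      using elim(2,3) that by auto
    have "\<bar>partition_sum t k (\<lambda>n i. c n i + d n i) n (\<nu> s) - (A s + B s)\<bar> \<le> e" if "s \<in> {0..T}" for s
      using bounds[OF that] unfolding partition_sum_add by linarith
    then show ?case using \<nu> unfolding partition_adapted_def by (intro exI[of _ \<nu>]) auto
  qed
qed

lemma J1_conv_partition_sum_lincomb: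
  assumes "partition_seq t k"
    and "localized_increments t k c" "localized_increments t k d"
    and "J1_conv (partition_sum t k c) A" "J1_conv (partition_sum t k d) B"
  shows "J1_conv (partition_sum t k (\<lambda>n i. a * c n i + b * d n i)) (\<lambda>s. a * A s + b * B s)"
  using J1_conv_partition_sum_add[OF assms(1) localized_increments_cmult[OF assms(2)]
      localized_increments_cmult[OF assms(3)]] J1_conv_cmult[OF assms(4)] J1_conv_cmult[OF assms(5)]
  unfolding partition_sum_cmult by blast

section \<open>Quadratic covariation\<close>

lemma J1_conv_qvar_sum:
  assumes pt: "partition_seq t k" and x: "x \<in> Dspace" and y: "y \<in> Dspace"
    and "J1_conv (qvar t k x x) X" "J1_conv (qvar t k y y) Y" "J1_conv (qvar t k x y) H"
  shows "J1_conv (qvar t k (\<lambda>s. x s + y s) (\<lambda>s. x s + y s)) (\<lambda>s. X s + Y s + 2 * H s)"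
proof -
  let ?c = "\<lambda>n i. 1 * qvar_increment t x x n i + 1 * qvar_increment t y y n i"
  note loc = localized_increments_qvar[OF pt] and J = assms(4-6)[unfolded qvar_eq_partition_sum]
  have "J1_conv (partition_sum t k ?c) (\<lambda>s. 1 * X s + 1 * Y s)"
    by (rule J1_conv_partition_sum_lincomb[OF pt loc[OF x x] loc[OF y y] J(1,2)])
  then have "J1_conv (partition_sum t k (\<lambda>n i. 1 * ?c n i + 2 * qvar_increment t x y n i))
      (\<lambda>s. 1 * (1 * X s + 1 * Y s) + 2 * H s)"
    by (rule J1_conv_partition_sum_lincomb[OF pt localized_increments_lincomb[OF loc[OF x x] loc[OF y y]]
          loc[OF x y] _ J(3)])
  moreover have "(\<lambda>n i. 1 * ?c n i + 2 * qvar_increment t x y n i)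
      = qvar_increment t (\<lambda>s. x s + y s) (\<lambda>s. x s + y s)"
    by (intro ext) (simp add: qvar_increment_polarization)
  ultimately show ?thesis by (simp add: qvar_eq_partition_sum)
qed

lemma J1_conv_qvar_cross:
  assumes pt: "partition_seq t k" and x: "x \<in> Dspace" and y: "y \<in> Dspace"
    and "J1_conv (qvar t k x x) X" "J1_conv (qvar t k y y) Y"
    and "J1_conv (qvar t k (\<lambda>s. x s + y s) (\<lambda>s. x s + y s)) S"
  shows "J1_conv (qvar t k x y) (\<lambda>s. (S s - X s - Y s) / 2)"
proof -
  let ?c = "\<lambda>n i. 1 * qvar_increment t x x n i + 1 * qvar_increment t y y n i"
  note loc = localized_increments_qvar[OF pt] and J = assms(4-6)[unfolded qvar_eq_partition_sum]
  have xy: "(\<lambda>s. x s + y s) \<in> Dspace" using x y by (rule Dspace_add)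
  have "J1_conv (partition_sum t k ?c) (\<lambda>s. 1 * X s + 1 * Y s)"
    by (rule J1_conv_partition_sum_lincomb[OF pt loc[OF x x] loc[OF y y] J(1,2)])
  then have "J1_conv (partition_sum t k (\<lambda>n i. (1 / 2) * qvar_increment t (\<lambda>s. x s + y s) (\<lambda>s. x s + y s) n i
      + (- 1 / 2) * ?c n i)) (\<lambda>s. (1 / 2) * S s + (- 1 / 2) * (1 * X s + 1 * Y s))"
    by (rule J1_conv_partition_sum_lincomb[OF pt loc[OF xy xy]
          localized_increments_lincomb[OF loc[OF x x] loc[OF y y]] J(3)])
  moreover have "(\<lambda>n i. (1 / 2) * qvar_increment t (\<lambda>s. x s + y s) (\<lambda>s. x s + y s) n i + (- 1 / 2) * ?c n i)
      = qvar_increment t x y"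
    by (intro ext) (simp add: qvar_increment_polarization algebra_simps)
  moreover have "(\<lambda>s. (1 / 2) * S s + (- 1 / 2) * (1 * X s + 1 * Y s)) = (\<lambda>s. (S s - X s - Y s) / 2)"
    by (simp add: field_simps)
  ultimately show ?thesis by (simp add: qvar_eq_partition_sum)
qed

theorem proposition3p4:
  fixes t :: "nat \<Rightarrow> nat \<Rightarrow> real" and k :: "nat \<Rightarrow> nat" and x y :: "real \<Rightarrow> real"
  assumes "partition_seq t k"
    and "x \<in> Qpi t k" and "y \<in> Qpi t k"
  shows "(D_convergent (qvar t k (\<lambda>s. x s + y s) (\<lambda>s. x s + y s))
           \<longleftrightarrow> D_convergent (qvar t k x y)) \<and>
         (D_convergent (qvar t k x y) \<longrightarrow>
           (\<lambda>s. x s + y s) \<in> Qpi t k \<and>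
           D_lim (qvar t k x y) =
             (\<lambda>s. (qv_bracket t k (\<lambda>s. x s + y s) s - qv_bracket t k x s - qv_bracket t k y s) / 2))"
proof -
  have x: "x \<in> Dspace" "D_convergent (qvar t k x x)" and y: "y \<in> Dspace" "D_convergent (qvar t k y y)"
    using assms(2,3) unfolding Qpi_def by auto
  note Jx = D_lim_J1_conv[OF x(2)] and Jy = D_lim_J1_conv[OF y(2)]
  have sum: "J1_conv (qvar t k (\<lambda>s. x s + y s) (\<lambda>s. x s + y s))
      (\<lambda>s. qv_bracket t k x s + qv_bracket t k y s + 2 * D_lim (qvar t k x y) s)"
    if "D_convergent (qvar t k x y)"
    using J1_conv_qvar_sum[OF assms(1) x(1) y(1) Jx Jy D_lim_J1_conv[OF that]] unfolding qv_bracket_def .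
  have S_conv: "D_convergent (qvar t k (\<lambda>s. x s + y s) (\<lambda>s. x s + y s))"
    if "D_convergent (qvar t k x y)"
    using sum[OF that] unfolding D_convergent_def by blast
  have "D_convergent (qvar t k x y)" if "D_convergent (qvar t k (\<lambda>s. x s + y s) (\<lambda>s. x s + y s))"
    using J1_conv_qvar_cross[OF assms(1) x(1) y(1) Jx Jy D_lim_J1_conv[OF that]]
    unfolding D_convergent_def by blast
  moreover have "D_lim (qvar t k x y) s =
      (qv_bracket t k (\<lambda>s. x s + y s) s - qv_bracket t k x s - qv_bracket t k y s) / 2"
    if "D_convergent (qvar t k x y)" for s
    \<comment> \<open>for s < 0 both sides vanish because D_lim is normalised to 0 there\<close>
    using D_lim_J1_conv_nonneg[OF sum[OF that]] D_lim_neg[OF S_conv[OF that]]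
      D_lim_neg[OF x(2)] D_lim_neg[OF y(2)] D_lim_neg[OF that]
    unfolding qv_bracket_def by (cases "s < 0") auto
  moreover have "(\<lambda>s. x s + y s) \<in> Dspace" using x(1) y(1) by (rule Dspace_add)
  ultimately show ?thesis using S_conv unfolding Qpi_def by blast
qed

end
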